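(* Let $\alpha,c\in\mathbb{N}$, $\alpha,c\ge1$, and let $F=(n_F)_{n\ge0}$ with $0_F=1$ and $n_F=\alpha^{n-1}c^n$ for $n\ge1$ (so that $(m+k)_F=\alpha\, m_F\, k_F$ for all $m,k\ge1$). Then for all $1\le a\le b$, the layer $\langle\Phi_a\to\Phi_b\rangle$ of the cobweb poset of $F$ admits a tiling by blocks of type $\sigma P_{b-a+1}$.
   Context: Notation: $n_F\equiv F_n$. The cobweb poset of $F$ has, for each $s\ge1$, a level $\Phi_s$ consisting of $s_F$ distinct vertices (levels pairwise disjoint), plus a root level $\Phi_0$ with one vertex; for $x\in\Phi_i$, $y\in\Phi_j$ one has $x<y$ iff $i<j$. For $1\le a\le b$, the layer $\langle\Phi_a\to\Phi_b\rangle$ is the subposet on $\Phi_a\cup\dots\cup\Phi_b$; it has $m=b-a+1$ levels and its maximal chains form the set $\Phi_a\times\dots\times\Phi_b$. For a permutation $\sigma$ of $\{1,\dots,m\}$, a block of type $\sigma P_m$ in this layer is the subposet induced on $V_a\cup\dots\cup V_b$ where $V_{a-1+i}\subseteq\Phi_{a-1+i}$ and $|V_{a-1+i}|=\sigma(i)_F$ for $i=1,\dots,m$; its maximal chains form the set $V_a\times\dots\times V_b$. A tiling of the layer is a finite family of such blocks ($\sigma$ may vary from block to block) whose sets $V_a\times\dots\times V_b$ partition $\Phi_a\times\dots\times\Phi_b$ (pairwise max-disjoint and covering all maximal chains). *)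

theory Defs
  imports Main "HOL-Combinatorics.Permutations" "HOL-Library.FuncSet"
begin

definition Fab :: "nat \<Rightarrow> nat \<Rightarrow> nat \<Rightarrow> nat" where
  "Fab \<alpha> c n = (if n = 0 then 1 else \<alpha> ^ (n - 1) * c ^ n)"

(* Level s of the cobweb poset is represented by the vertices {..< F s} (tagged by s);
   a maximal chain of the layer <Phi_a -> Phi_b> is a function x on {a..b}
   with x s \<in> Phi_s, i.e. an element of PiE {a..b} (\<lambda>s. {..<F s}). *)
definition layer_chains :: "(nat \<Rightarrow> nat) \<Rightarrow> nat \<Rightarrow> nat \<Rightarrow> (nat \<Rightarrow> nat) set" where
  "layer_chains F a b = PiE {a..b} (\<lambda>s. {..<F s})"

definition is_block_of_type ::
  "(nat \<Rightarrow> nat) \<Rightarrow> nat \<Rightarrow> nat \<Rightarrow> (nat \<Rightarrow> nat) \<Rightarrow> (nat \<Rightarrow> nat set) \<Rightarrow> bool" where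
  "is_block_of_type F a b \<sigma> V \<longleftrightarrow>
     \<sigma> permutes {1..b - a + 1} \<and>
     (\<forall>i\<in>{1..b - a + 1}. V (a - 1 + i) \<subseteq> {..<F (a - 1 + i)} \<and>
                          card (V (a - 1 + i)) = F (\<sigma> i))"

definition is_block :: "(nat \<Rightarrow> nat) \<Rightarrow> nat \<Rightarrow> nat \<Rightarrow> (nat \<Rightarrow> nat set) \<Rightarrow> bool" where
  "is_block F a b V \<longleftrightarrow> (\<exists>\<sigma>. is_block_of_type F a b \<sigma> V)"

definition block_chains :: "nat \<Rightarrow> nat \<Rightarrow> (nat \<Rightarrow> nat set) \<Rightarrow> (nat \<Rightarrow> nat) set" where
  "block_chains a b V = PiE {a..b} V"

definition is_tiling :: "(nat \<Rightarrow> nat) \<Rightarrow> nat \<Rightarrow> nat \<Rightarrow> (nat \<Rightarrow> nat set) set \<Rightarrow> bool" where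
  "is_tiling F a b T \<longleftrightarrow>
     finite T \<and>
     (\<forall>V\<in>T. is_block F a b V) \<and>
     (\<forall>V\<in>T. \<forall>W\<in>T. V \<noteq> W \<longrightarrow> block_chains a b V \<inter> block_chains a b W = {}) \<and>
     (\<Union>V\<in>T. block_chains a b V) = layer_chains F a b"

end

theory Submission
  imports Defs "HOL-Library.Disjoint_Sets"
begin

(*
  Suppose that, for some permutation sigma of {1..m} (m = b - a + 1),
  the number sigma(i)_F divides the size (a - 1 + i)_F of the level Phi_(a-1+i) for every i.
  Then each level Phi_s = {..< s_F} is partitioned into consecutive intervals of
  length sigma(s - a + 1)_F, and choosing one interval on every level gives a block of
  type sigma P_m.  Since the maximal chains of the layer form the cartesian product of
  the levels, the products of these level partitions partition the set of maximal
  chains, i.e. all such choices of intervals form a tiling.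

  For F = Fab alpha c the identity permutation meets
  the criterion, because i_F = alpha^(i-1) c^i divides (a-1+i)_F = alpha^(a+i-2) c^(a-1+i).
*)

text \<open>Disjointness of
  two different boxes comes from a coordinate where they choose different parts.\<close>

lemma PiE_boxes_disjoint:
  assumes "\<And>s. s \<in> I \<Longrightarrow> disjoint (P s)"
    and "V \<in> PiE I P" and "W \<in> PiE I P" and "V \<noteq> W"
  shows "PiE I V \<inter> PiE I W = {}"
proof -
  obtain s where s: "s \<in> I" "V s \<noteq> W s"
    using assms(2-4) by (metis PiE_ext)
  have "V s \<inter> W s = {}"
    using assms(1)[OF s(1)] assms(2,3) s by (auto simp: disjoint_def)
  then show ?thesis using s(1) by (auto simp: PiE_iff)
qed

lemma PiE_boxes_cover:
  assumes "\<And>s. s \<in> I \<Longrightarrow> \<Union>(P s) = A s"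
  shows "(\<Union>V\<in>PiE I P. PiE I V) = PiE I A"
proof
  show "(\<Union>V\<in>PiE I P. PiE I V) \<subseteq> PiE I A"
    using assms by (fastforce simp: PiE_iff)
next
  show "PiE I A \<subseteq> (\<Union>V\<in>PiE I P. PiE I V)"
  proof
    fix x assume x: "x \<in> PiE I A"
    have "x s \<in> \<Union>(P s)" if "s \<in> I" for s
      using x assms that by (auto simp: PiE_iff)
    then have "\<forall>s\<in>I. \<exists>X\<in>P s. x s \<in> X"
      by blast
    then obtain part where part: "\<forall>s\<in>I. part s \<in> P s \<and> x s \<in> part s"
      by metis
    define V where "V = restrict part I"
    have "V \<in> PiE I P" and "x \<in> PiE I V"
      using part x by (auto simp: V_def PiE_iff)
    then show "x \<in> (\<Union>V\<in>PiE I P. PiE I V)" by blast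
  qed
qed

definition length_interval :: "nat \<Rightarrow> nat \<Rightarrow> nat set" where
  "length_interval d k = {k * d..<Suc k * d}"

lemma mem_length_interval_iff:
  assumes "0 < d"
  shows "x \<in> length_interval d k \<longleftrightarrow> x div d = k"
proof
  assume "x \<in> length_interval d k"
  then show "x div d = k"
    by (intro div_nat_eqI) (auto simp: length_interval_def mult.commute)
next
  assume "x div d = k"
  moreover have "x div d * d \<le> x" and "x < x div d * d + d"
    using div_mult_mod_eq[of x d] mod_less_divisor[OF assms, of x] by linarith+
  ultimately show "x \<in> length_interval d k"
    by (simp add: length_interval_def)
qed

lemma card_length_interval: "card (length_interval d k) = d"
  by (simp add: length_interval_def)

lemma partition_on_length_intervals:
  assumes "0 < d" and "d dvd n"
  shows "partition_on {..<n} (length_interval d ` {..<n div d})"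
proof (rule partition_onI)
  show "\<Union>(length_interval d ` {..<n div d}) = {..<n}"
  proof (intro equalityI subsetI)
    fix x assume "x \<in> \<Union>(length_interval d ` {..<n div d})"
    then obtain k where "k < n div d" and "x \<in> length_interval d k"
      by blast
    then have "x div d < n div d"
      using mem_length_interval_iff[OF assms(1)] by simp
    then have "x < n div d * d"
      using div_less_iff_less_mult[OF assms(1)] by blast
    then show "x \<in> {..<n}"
      using dvd_div_mult_self[OF assms(2)] by simp
  next
    fix x assume "x \<in> {..<n}"
    then have "x div d < n div d"
      using assms by (auto elim!: dvdE intro!: less_mult_imp_div_less simp: mult.commute)
    then show "x \<in> \<Union>(length_interval d ` {..<n div d})"
      using mem_length_interval_iff[OF assms(1)] by blast
  qed
next
  fix X Y assume "X \<in> length_interval d ` {..<n div d}" "Y \<in> length_interval d ` {..<n div d}"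
    and "X \<noteq> Y"
  then obtain k l where "X = length_interval d k" "Y = length_interval d l" "k \<noteq> l"
    by blast
  then show "disjnt X Y"
    by (auto simp: disjnt_def mem_length_interval_iff[OF assms(1)])
next
  have "k * d \<in> length_interval d k" for k
    using assms(1) by (simp add: length_interval_def)
  then show "{} \<notin> length_interval d ` {..<n div d}"
    by blast
qed

lemma tiling_by_dividing_permutation:
  fixes F :: "nat \<Rightarrow> nat" and \<sigma> :: "nat \<Rightarrow> nat"
  assumes "1 \<le> a" and "a \<le> b" and \<sigma>: "\<sigma> permutes {1..b - a + 1}"
    and dvd: "\<And>i. i \<in> {1..b - a + 1} \<Longrightarrow> 0 < F (\<sigma> i) \<and> F (\<sigma> i) dvd F (a - 1 + i)"
  shows "\<exists>T. is_tiling F a b T"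
proof -
  define d where "d s = F (\<sigma> (s - a + 1))" for s
  define P where "P s = length_interval (d s) ` {..<F s div d s}" for s
  have level: "0 < d s \<and> d s dvd F s" if "s \<in> {a..b}" for s
    using dvd[of "s - a + 1"] that assms(1) by (auto simp: d_def)
  have partition: "partition_on {..<F s} (P s)" if "s \<in> {a..b}" for s
    using partition_on_length_intervals level[OF that] by (simp add: P_def)
  define T where "T = PiE {a..b} P"
  have "is_block F a b V" if "V \<in> T" for V
    unfolding is_block_def is_block_of_type_def
  proof (intro exI[of _ \<sigma>] conjI \<sigma> ballI)
    fix i assume i: "i \<in> {1..b - a + 1}"
    define s where "s = a - 1 + i"
    have s: "s \<in> {a..b}" and "s - a + 1 = i"
      using i assms(1,2) by (auto simp: s_def)
    then have "V s \<in> P s" and "d s = F (\<sigma> i)"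
      using that by (auto simp: T_def d_def)
    then show "V (a - 1 + i) \<subseteq> {..<F (a - 1 + i)}"
      and "card (V (a - 1 + i)) = F (\<sigma> i)"
      using partition_onD1[OF partition[OF s]] by (auto simp: s_def P_def card_length_interval)
  qed
  moreover have "finite T"
    by (simp add: T_def P_def finite_PiE)
  moreover have "block_chains a b V \<inter> block_chains a b W = {}"
    if "V \<in> T" "W \<in> T" "V \<noteq> W" for V W
  proof -
    have "disjoint (P s)" if "s \<in> {a..b}" for s
      using partition_onD2[OF partition[OF that]] .
    from PiE_boxes_disjoint[OF this that[unfolded T_def]] show ?thesis
      by (simp add: block_chains_def)
  qed
  moreover have "(\<Union>V\<in>T. block_chains a b V) = layer_chains F a b"
  proof -
    have "\<Union>(P s) = {..<F s}" if "s \<in> {a..b}" for s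
      using partition_onD1[OF partition[OF that]] by simp
    from PiE_boxes_cover[of "{a..b}" P "\<lambda>s. {..<F s}", OF this] show ?thesis
      by (simp add: block_chains_def layer_chains_def T_def)
  qed
  ultimately have "is_tiling F a b T"
    unfolding is_tiling_def by blast
  then show ?thesis ..
qed

lemma Fab_pos: "1 \<le> \<alpha> \<Longrightarrow> 1 \<le> c \<Longrightarrow> 0 < Fab \<alpha> c n"
  by (simp add: Fab_def)

lemma Fab_dvd_shift:
  assumes "1 \<le> i"
  shows "Fab \<alpha> c i dvd Fab \<alpha> c (j + i)"
proof -
  have "\<alpha> ^ (i - 1) * c ^ i dvd \<alpha> ^ (j + i - 1) * c ^ (j + i)"
    by (intro mult_dvd_mono le_imp_power_dvd) auto
  then show ?thesis
    using assms by (simp add: Fab_def)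
qed

theorem mainTheorem7:
  fixes \<alpha> c a b :: nat
  assumes "\<alpha> \<ge> 1" and "c \<ge> 1" and "1 \<le> a" and "a \<le> b"
  shows "\<exists>T. is_tiling (Fab \<alpha> c) a b T"
proof (rule tiling_by_dividing_permutation[OF \<open>1 \<le> a\<close> \<open>a \<le> b\<close> permutes_id])
  fix i assume "i \<in> {1..b - a + 1}"
  then show "0 < Fab \<alpha> c (id i) \<and> Fab \<alpha> c (id i) dvd Fab \<alpha> c (a - 1 + i)"
    using Fab_pos[OF assms(1,2)] Fab_dvd_shift[of i \<alpha> c "a - 1"] by simp
qed

end
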